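(* Let $X,Y$ be complex Banach spaces and $\mathrm R$ a non-empty collection of sequences in $\mathbb R^n$. Let $(R(\mathbf t))_{\mathbf t>\mathbf 0}\subseteq L(X,Y)$ be a strongly continuous operator family with $\int_{(0,\infty)^n}\|R(\mathbf t)\|\,d\mathbf t<\infty$. If $f:\mathbb R^n\to X$ is bounded and $\mathrm R$-multi-almost periodic, then $$F(\mathbf t):=\int_{-\infty}^{t_1}\int_{-\infty}^{t_2}\cdots\int_{-\infty}^{t_n}R(\mathbf t-\mathbf s)f(\mathbf s)\,d\mathbf s,\quad\mathbf t=(t_1,\dots,t_n)\in\mathbb R^n,$$ is well-defined and $\mathrm R$-multi-almost periodic.
   Context: $\mathbf t>\mathbf 0$ means every component of $\mathbf t$ is strictly positive. A continuous $g:\mathbb R^n\to V$ ($V$ a Banach space) is $\mathrm R$-multi-almost periodic if for every $(\mathbf b_k)\in\mathrm R$ there exist a subsequence $(\mathbf b_{k_l})$ and $g^\ast:\mathbb R^n\to V$ with $g(\mathbf t+\mathbf b_{k_l})\to g^\ast(\mathbf t)$ uniformly for $\mathbf t\in\mathbb R^n$. *)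

theory Defs
  imports "HOL-Analysis.Analysis"
begin

definition multi_almost_periodic ::
  "(nat \<Rightarrow> real^'n) set \<Rightarrow> (real^'n \<Rightarrow> 'v::real_normed_vector) \<Rightarrow> bool" where
  "multi_almost_periodic Rc g \<longleftrightarrow>
     continuous_on UNIV g \<and>
     (\<forall>b\<in>Rc. \<exists>r g'. strict_mono r \<and>
        uniform_limit UNIV (\<lambda>l t. g (t + b (r l))) g' sequentially)"

definition pos_orthant :: "(real^'n) set" where
  "pos_orthant = {t. \<forall>i. 0 < t $ i}"

definition lower_orthant :: "real^'n \<Rightarrow> (real^'n) set" where
  "lower_orthant t = {s. \<forall>i. s $ i < t $ i}"

end

theory Submission
  imports Defs
begin

text \<open>Substituting \<open>s = t - u\<close> turns the integral into the convolution
  \<open>conv f t = \<integral> R u (f (t - u)) du\<close> over the open orthant \<open>(0,\<infinity>)\<^sup>n\<close>.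
  The integrand is continuous, because along a convergent sequence \<open>x n\<close> the strongly
  convergent operators \<open>R (x n)\<close> are uniformly bounded (uniform boundedness principle), and it
  is dominated by \<open>M * norm (R u)\<close> with \<open>M\<close> a bound of \<open>f\<close>. This gives integrability over
  the open orthant, continuity of \<open>conv f\<close> by dominated convergence, and the estimate
  \<open>norm (conv f t\<^sub>1 - conv f t\<^sub>2) \<le> \<epsilon> * \<integral> norm R\<close> whenever
  \<open>norm (f (t\<^sub>1 - u) - f (t\<^sub>2 - u)) \<le> \<epsilon>\<close> for all \<open>u\<close>. Hence a subsequence along which
  the translates of \<open>f\<close> are uniformly Cauchy makes the translates of \<open>conv f\<close> uniformly
  Cauchy, and completeness of \<open>Y\<close> yields the uniform limit.\<close>

lemma norm_blinfun_le_if_bounded_on_ball: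
  fixes T :: "'a::real_normed_vector \<Rightarrow>\<^sub>L 'b::real_normed_vector"
  assumes r: "r > 0" and bd: "\<And>x. x \<in> ball x0 r \<Longrightarrow> norm (T x) \<le> k"
  shows "norm T \<le> 4 * k / r"
proof (rule norm_blinfun_bound)
  have "0 \<le> k" using order_trans[OF norm_ge_zero bd[of x0]] r by simp
  then show "0 \<le> 4 * k / r" using r by simp
  have small: "norm (T z) \<le> 2 * k" if "norm z < r" for z
  proof -
    have "norm (T z) = norm (T (x0 + z) - T x0)" by (simp add: blinfun.add_right)
    also have "\<dots> \<le> norm (T (x0 + z)) + norm (T x0)" by (rule norm_triangle_ineq4)
    also have "\<dots> \<le> 2 * k" using bd[of "x0 + z"] bd[of x0] that r by (simp add: dist_norm)
    finally show ?thesis .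
  qed
  fix y :: 'a
  show "norm (T y) \<le> 4 * k / r * norm y"
  proof (cases "y = 0")
    case False
    have "norm (T y) = (2 * norm y / r) * norm (T ((r / 2 / norm y) *\<^sub>R y))"
      using False r by (simp add: blinfun.scaleR_right)
    also have "\<dots> \<le> (2 * norm y / r) * (2 * k)"
      using False r by (intro mult_left_mono small) auto
    finally show ?thesis by (simp add: field_simps)
  qed simp
qed

lemma uniform_boundedness:
  fixes T :: "'i \<Rightarrow> 'a::banach \<Rightarrow>\<^sub>L 'b::real_normed_vector"
  assumes "\<And>x. bounded (range (\<lambda>n. T n x))"
  shows "bounded (range T)"
proof -
  define A where "A k = {x. \<forall>n. norm (T n x) \<le> real k}" for k :: nat
  have closed: "closedin euclidean (A k)" for k
    unfolding A_def closed_closedin[symmetric]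
    by (intro closed_Collect_all closed_Collect_le continuous_intros)
  have cover: "\<Union>(range A) = UNIV"
  proof safe
    fix x :: 'a
    obtain B where "\<forall>n. norm (T n x) \<le> B" using assms[of x] unfolding bounded_iff by auto
    moreover obtain k :: nat where "B \<le> real k" using real_arch_simple by blast
    ultimately show "x \<in> \<Union>(range A)" unfolding A_def by (auto intro: order_trans)
  qed auto
  have "\<exists>k. interior (A k) \<noteq> {}"
  proof (rule ccontr)
    assume "\<nexists>k. interior (A k) \<noteq> {}"
    then have "euclidean interior_of \<Union>(range A) = {}"
      using closed completely_metrizable_space_euclidean by (intro Baire_category_alt) auto
    then show False using cover by simp
  qed
  then obtain k x0 where "x0 \<in> interior (A k)" by blast
  then obtain r where r: "r > 0" and "ball x0 r \<subseteq> A k"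
    unfolding mem_interior by blast
  then have "norm (T n x) \<le> real k" if "x \<in> ball x0 r" for n x
    using that unfolding A_def by blast
  then have "norm (T n) \<le> 4 * real k / r" for n
    by (rule norm_blinfun_le_if_bounded_on_ball[OF r])
  then show ?thesis by (auto intro!: boundedI[where B = "4 * real k / r"])
qed

lemma continuous_on_strongly_continuous_apply:
  fixes R :: "'s::metric_space \<Rightarrow> ('x::banach \<Rightarrow>\<^sub>L 'y::real_normed_vector)"
  assumes R: "\<And>x. continuous_on S (\<lambda>t. R t x)" and h: "continuous_on S h"
  shows "continuous_on S (\<lambda>u. R u (h u))"
  unfolding continuous_on_sequentially o_def
proof (intro allI ballI impI)
  fix x a assume a: "a \<in> S" and x: "(\<forall>n. x n \<in> S) \<and> x \<longlonglongrightarrow> a"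
  have R_lim: "(\<lambda>n. R (x n) y) \<longlonglongrightarrow> R a y" for y
    using R[of y] a x unfolding continuous_on_sequentially o_def by blast
  have h_lim: "(\<lambda>n. h (x n)) \<longlonglongrightarrow> h a"
    using h a x unfolding continuous_on_sequentially o_def by blast
  have "bounded (range (\<lambda>n. R (x n)))"
    using R_lim by (intro uniform_boundedness convergent_imp_bounded)
  then obtain B where "\<And>n. norm (R (x n)) \<le> B" unfolding bounded_iff by auto
  then have bound: "norm (R (x n) v) \<le> norm v * B" for n v
    using norm_blinfun[of "R (x n)" v] mult_left_mono[of "norm (R (x n))" B "norm v"]
    by (simp add: mult.commute)
  have "Zfun (\<lambda>n. h (x n) - h a) sequentially"
    using h_lim by (simp only: tendsto_Zfun_iff)
  then have "Zfun (\<lambda>n. R (x n) (h (x n) - h a)) sequentially"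
    by (rule Zfun_imp_Zfun[where K=B]) (simp add: bound always_eventually)
  then have "(\<lambda>n. R (x n) (h (x n) - h a)) \<longlonglongrightarrow> 0"
    by (simp only: tendsto_Zfun_iff diff_zero)
  then have "(\<lambda>n. R (x n) (h (x n) - h a) + R (x n) (h a)) \<longlonglongrightarrow> 0 + R a (h a)"
    by (intro tendsto_add R_lim)
  then show "(\<lambda>n. R (x n) (h (x n))) \<longlonglongrightarrow> R a (h a)"
    by (simp add: blinfun.diff_right)
qed

lemma continuous_on_reflect_translate:
  fixes f :: "'a::real_normed_vector \<Rightarrow> 'b::topological_space"
  assumes f: "continuous_on UNIV f"
  shows "continuous_on A (\<lambda>u. f (t - u))"
  by (rule continuous_on_compose2[OF f]) (auto intro!: continuous_intros)

lemma has_integral_reflect_translate_cbox: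
  fixes f :: "'a::euclidean_space \<Rightarrow> 'b::real_normed_vector"
  assumes "(f has_integral i) (cbox a b)"
  shows "((\<lambda>x. f (c - x)) has_integral i) (cbox (c - b) (c - a))"
  using has_integral_shift_cbox[OF has_integral_reflect_lemma[OF assms], of "- c"]
  by (simp add: algebra_simps)

lemma has_integral_reflect_translate:
  fixes f :: "'a::euclidean_space \<Rightarrow> 'b::banach"
  assumes "(f has_integral i) S"
  shows "((\<lambda>x. f (c - x)) has_integral i) ((\<lambda>x. c - x) ` S)"
proof -
  define g where "g = (\<lambda>x. if x \<in> S then f x else 0)"
  have g_int: "(g has_integral i) UNIV"
    using assms by (simp add: g_def has_integral_restrict_UNIV)
  have "((\<lambda>x. g (c - x)) has_integral i) UNIV"
  proof (rule has_integral'[THEN iffD2], intro allI impI)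
    fix e :: real assume "e > 0"
    from has_integral'[THEN iffD1, OF g_int, rule_format, OF this]
    obtain B where "B > 0" and B: "\<And>a b. ball 0 B \<subseteq> cbox a b \<Longrightarrow>
      \<exists>z. (g has_integral z) (cbox a b) \<and> norm (z - i) < e"
      by (simp only: UNIV_I if_True) blast
    show "\<exists>B>0. \<forall>a b. ball 0 B \<subseteq> cbox a b \<longrightarrow> (\<exists>z. ((\<lambda>x. if x \<in> UNIV then g (c - x) else 0)
      has_integral z) (cbox a b) \<and> norm (z - i) < e)"
    proof (intro exI[of _ "B + norm c"] conjI allI impI)
      show "0 < B + norm c" using \<open>B > 0\<close> by (simp add: add_pos_nonneg)
      fix a b :: 'a assume ab: "ball 0 (B + norm c) \<subseteq> cbox a b"
      have "ball 0 B \<subseteq> cbox (c - b) (c - a)"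
      proof
        fix y :: 'a assume "y \<in> ball 0 B"
        then have "c - y \<in> cbox a b"
          using ab norm_triangle_ineq4[of c y] by (force simp: dist_norm)
        then show "y \<in> cbox (c - b) (c - a)" by (auto simp: mem_box inner_diff_left)
      qed
      then obtain z where "(g has_integral z) (cbox (c - b) (c - a))" "norm (z - i) < e"
        using B by blast
      then show "\<exists>z. ((\<lambda>x. if x \<in> UNIV then g (c - x) else 0) has_integral z) (cbox a b) \<and> norm (z - i) < e"
        using has_integral_reflect_translate_cbox[of g z "c - b" "c - a" c] by auto
    qed
  qed
  moreover have "(\<lambda>x. g (c - x)) = (\<lambda>x. if x \<in> (\<lambda>x. c - x) ` S then f (c - x) else 0)"
    by (force simp: g_def image_iff)
  ultimately show ?thesis
    by (metis has_integral_restrict_UNIV)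
qed

lemma gauge_rsum_diff_lt_integral_bound:
  fixes f g :: "'a::euclidean_space \<Rightarrow> 'b::real_normed_vector"
  assumes k: "k integrable_on cbox a b" and fg: "\<forall>x\<in>cbox a b. norm (f x - g x) \<le> k x"
    and "e > 0"
  obtains \<gamma> where "gauge \<gamma>"
    and "\<And>p. p tagged_division_of cbox a b \<Longrightarrow> \<gamma> fine p \<Longrightarrow>
      norm ((\<Sum>(x,K)\<in>p. Henstock_Kurzweil_Integration.content K *\<^sub>R f x)
          - (\<Sum>(x,K)\<in>p. Henstock_Kurzweil_Integration.content K *\<^sub>R g x))
        < integral (cbox a b) k + e"
proof -
  obtain \<gamma> where "gauge \<gamma>" and \<gamma>: "\<And>p. p tagged_division_of cbox a b \<Longrightarrow> \<gamma> fine p \<Longrightarrow>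
      norm ((\<Sum>(x,K)\<in>p. Henstock_Kurzweil_Integration.content K *\<^sub>R k x) - integral (cbox a b) k) < e"
    using has_integral[THEN iffD1, OF integrable_integral[OF k], rule_format, of e] \<open>e > 0\<close>
    by auto
  have "norm ((\<Sum>(x,K)\<in>p. Henstock_Kurzweil_Integration.content K *\<^sub>R f x)
          - (\<Sum>(x,K)\<in>p. Henstock_Kurzweil_Integration.content K *\<^sub>R g x))
        < integral (cbox a b) k + e"
    if p: "p tagged_division_of cbox a b" and fine: "\<gamma> fine p" for p
  proof -
    have "norm ((\<Sum>(x,K)\<in>p. Henstock_Kurzweil_Integration.content K *\<^sub>R f x)
          - (\<Sum>(x,K)\<in>p. Henstock_Kurzweil_Integration.content K *\<^sub>R g x))
        = norm (\<Sum>(x,K)\<in>p. Henstock_Kurzweil_Integration.content K *\<^sub>R (f x - g x))"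
      by (simp add: sum_subtractf[symmetric] case_prod_unfold scaleR_diff_right)
    also have "\<dots> \<le> (\<Sum>(x,K)\<in>p. norm (Henstock_Kurzweil_Integration.content K *\<^sub>R (f x - g x)))"
      by (simp add: case_prod_unfold sum_norm_le)
    also have "\<dots> \<le> (\<Sum>(x,K)\<in>p. Henstock_Kurzweil_Integration.content K *\<^sub>R k x)"
      using tag_in_interval[OF p] fg by (intro sum_mono) (auto intro: mult_left_mono)
    also have "\<dots> < integral (cbox a b) k + e"
      using \<gamma>[OF p fine] unfolding real_norm_def by arith
    finally show ?thesis .
  qed
  with \<open>gauge \<gamma>\<close> show ?thesis using that by blast
qed

lemma integrable_on_cbox_if_dominated_approx:
  fixes f :: "'a::euclidean_space \<Rightarrow> 'b::banach"
  assumes approx: "\<And>e. e > 0 \<Longrightarrow> \<exists>g k. g integrable_on cbox a b \<and> k integrable_on cbox a b \<and>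
             integral (cbox a b) k < e \<and> (\<forall>x\<in>cbox a b. norm (f x - g x) \<le> k x)"
  shows "f integrable_on cbox a b"
  unfolding integrable_Cauchy
proof (intro allI impI)
  fix e :: real assume "e > 0"
  then obtain g k where g: "g integrable_on cbox a b" and k: "k integrable_on cbox a b"
    and k_small: "integral (cbox a b) k < e/6" and fg: "\<forall>x\<in>cbox a b. norm (f x - g x) \<le> k x"
    using approx[of "e/6"] by auto
  let ?S = "\<lambda>h p. \<Sum>(x,K)\<in>p. Henstock_Kurzweil_Integration.content K *\<^sub>R h x"
  obtain \<gamma>1 where "gauge \<gamma>1" and \<gamma>1: "\<And>p. p tagged_division_of cbox a b \<Longrightarrow> \<gamma>1 fine p \<Longrightarrow>
      norm (?S g p - integral (cbox a b) g) < e/6"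
    using has_integral[THEN iffD1, OF integrable_integral[OF g], rule_format, of "e/6"] \<open>e > 0\<close>
    by auto
  have "e/6 > 0" using \<open>e > 0\<close> by simp
  then obtain \<gamma>2 where "gauge \<gamma>2" and \<gamma>2: "\<And>p. p tagged_division_of cbox a b \<Longrightarrow> \<gamma>2 fine p \<Longrightarrow>
      norm (?S f p - ?S g p) < integral (cbox a b) k + e/6"
    by (rule gauge_rsum_diff_lt_integral_bound[OF k fg]) blast
  have norm_diff_four_terms: "norm (u1 - u2) \<le> norm (u1 - v1) + norm (v1 - I) + norm (v2 - I) + norm (u2 - v2)"
    for u1 u2 v1 v2 I :: 'b
    by norm
  show "\<exists>\<gamma>. gauge \<gamma> \<and> (\<forall>p1 p2. p1 tagged_division_of cbox a b \<and> \<gamma> fine p1 \<and>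
      p2 tagged_division_of cbox a b \<and> \<gamma> fine p2 \<longrightarrow> norm (?S f p1 - ?S f p2) < e)"
  proof (intro exI[of _ "\<lambda>x. \<gamma>1 x \<inter> \<gamma>2 x"] conjI allI impI)
    show "gauge (\<lambda>x. \<gamma>1 x \<inter> \<gamma>2 x)" using \<open>gauge \<gamma>1\<close> \<open>gauge \<gamma>2\<close> by (rule gauge_Int)
    fix p1 p2
    assume "p1 tagged_division_of cbox a b \<and> (\<lambda>x. \<gamma>1 x \<inter> \<gamma>2 x) fine p1 \<and>
      p2 tagged_division_of cbox a b \<and> (\<lambda>x. \<gamma>1 x \<inter> \<gamma>2 x) fine p2"
    then have p1: "p1 tagged_division_of cbox a b" "\<gamma>1 fine p1" "\<gamma>2 fine p1"
      and p2: "p2 tagged_division_of cbox a b" "\<gamma>1 fine p2" "\<gamma>2 fine p2"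
      by (auto simp: fine_Int)
    have "norm (?S f p1 - ?S f p2) \<le> norm (?S f p1 - ?S g p1) + norm (?S g p1 - integral (cbox a b) g)
        + norm (?S g p2 - integral (cbox a b) g) + norm (?S f p2 - ?S g p2)"
      using norm_diff_four_terms by blast
    also have "\<dots> < e"
      using \<gamma>1[OF p1(1,2)] \<gamma>1[OF p2(1,2)] \<gamma>2[OF p1(1,3)] \<gamma>2[OF p2(1,3)] k_small by simp
    finally show "norm (?S f p1 - ?S f p2) < e" .
  qed
qed

lemma minus_image_pos_orthant: "(\<lambda>u. t - u) ` pos_orthant = lower_orthant (t::real^'n)"
proof -
  have "s \<in> (\<lambda>u. t - u) ` pos_orthant" if "s \<in> lower_orthant t" for s
    using that by (intro image_eqI[of _ _ "t - s"]) (auto simp: pos_orthant_def lower_orthant_def)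
  then show ?thesis by (auto simp: pos_orthant_def lower_orthant_def)
qed

definition orthant_box :: "nat \<Rightarrow> (real^'n) set" where
  "orthant_box m = cbox (\<chi> i. 1 / (real m + 1)) (\<chi> i. real m + 1)"

lemma orthant_box_subset_pos_orthant: "orthant_box m \<subseteq> pos_orthant"
proof
  fix x :: "real^'n" assume "x \<in> orthant_box m"
  then have "1 / (real m + 1) \<le> x $ i" for i by (simp add: orthant_box_def mem_box_cart)
  then have "0 < x $ i" for i by (rule less_le_trans[rotated]) simp
  then show "x \<in> pos_orthant" by (simp add: pos_orthant_def)
qed

lemma eventually_in_orthant_box:
  assumes "x \<in> pos_orthant"
  shows "\<forall>\<^sub>F m in sequentially. x \<in> orthant_box m"
proof -
  have "\<forall>\<^sub>F m in sequentially. 1 / (real m + 1) \<le> x $ i \<and> x $ i \<le> real m + 1" for i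
  proof -
    have "0 < x $ i" using assms by (simp add: pos_orthant_def)
    then obtain n1 where n1: "inverse (real (Suc n1)) < x $ i" using reals_Archimedean by blast
    obtain n2 :: nat where n2: "x $ i \<le> real n2" using real_arch_simple by blast
    have "1 / (real m + 1) \<le> x $ i \<and> x $ i \<le> real m + 1" if "max n1 n2 \<le> m" for m
    proof -
      have "1 / (real m + 1) \<le> inverse (real (Suc n1))" using that by (simp add: field_simps)
      then show ?thesis using that n1 n2 by linarith
    qed
    then show ?thesis unfolding eventually_sequentially by blast
  qed
  then have "\<forall>\<^sub>F m in sequentially. \<forall>i. 1 / (real m + 1) \<le> x $ i \<and> x $ i \<le> real m + 1"
    by (rule eventually_all_finite)
  then show ?thesis by (simp add: orthant_box_def mem_box_cart)
qed

lemma integrable_on_orthant_box: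
  fixes G :: "real^'n \<Rightarrow> 'b::banach"
  assumes "G integrable_on pos_orthant"
  shows "G integrable_on orthant_box m"
  by (metis assms integrable_on_subcbox orthant_box_def orthant_box_subset_pos_orthant)

lemma integral_orthant_box_tendsto:
  fixes G :: "real^'n \<Rightarrow> real"
  assumes G: "G integrable_on pos_orthant" and G_nonneg: "\<And>x. x \<in> pos_orthant \<Longrightarrow> 0 \<le> G x"
  shows "(\<lambda>m. integral (orthant_box m) G) \<longlonglongrightarrow> integral pos_orthant G"
proof -
  have "(\<lambda>m. integral UNIV (\<lambda>x. if x \<in> orthant_box m then G x else 0))
          \<longlonglongrightarrow> integral UNIV (\<lambda>x. if x \<in> pos_orthant then G x else 0)"
  proof (rule dominated_convergence(2))
    show "(\<lambda>x. if x \<in> orthant_box m then G x else 0) integrable_on UNIV" for m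
      using integrable_on_orthant_box[OF G] by (simp add: integrable_restrict_UNIV)
    show "(\<lambda>x. if x \<in> pos_orthant then G x else 0) integrable_on UNIV"
      using G by (simp add: integrable_restrict_UNIV)
    show "norm (if x \<in> orthant_box m then G x else 0) \<le> (if x \<in> pos_orthant then G x else 0)" for m x
      using orthant_box_subset_pos_orthant[of m] G_nonneg[of x] by auto
    show "(\<lambda>m. if x \<in> orthant_box m then G x else 0) \<longlonglongrightarrow> (if x \<in> pos_orthant then G x else 0)" for x
    proof (cases "x \<in> pos_orthant")
      case True
      have "\<forall>\<^sub>F m in sequentially.
          (if x \<in> orthant_box m then G x else 0) = (if x \<in> pos_orthant then G x else 0)"
        using eventually_in_orthant_box[OF True] by eventually_elim (simp add: True)
      then show ?thesis by (rule tendsto_eventually)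
    next
      case False
      then have "x \<notin> orthant_box m" for m using orthant_box_subset_pos_orthant by blast
      then show ?thesis by (simp add: False)
    qed
  qed
  then show ?thesis by (simp only: integral_restrict_UNIV)
qed

text \<open>The codomain need not be separable, so the Bochner integral (and with it
  \<open>measurable_bounded_by_integrable_imp_integrable\<close>) is not available; instead the function
  is approximated by its restrictions to the compact boxes \<open>orthant_box m\<close>.\<close>

lemma integrable_on_pos_orthant_if_continuous_dominated:
  fixes F :: "real^'n \<Rightarrow> 'b::banach"
  assumes F: "continuous_on pos_orthant F" and G: "G integrable_on pos_orthant"
    and F_le_G: "\<And>x. x \<in> pos_orthant \<Longrightarrow> norm (F x) \<le> G x"
  shows "F integrable_on pos_orthant"
proof (rule integrable_on_all_intervals_integrable_bound[OF _ F_le_G G])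
  fix a b :: "real^'n"
  have G_nonneg: "x \<in> pos_orthant \<Longrightarrow> 0 \<le> G x" for x
    using F_le_G[of x] norm_ge_zero[of "F x"] by linarith
  define Gp where "Gp = (\<lambda>x. if x \<in> pos_orthant then G x else 0)"
  define Gm where "Gm m = (\<lambda>x. if x \<in> orthant_box m then G x else 0)" for m
  have Gp: "Gp integrable_on UNIV"
    using G by (simp add: Gp_def integrable_restrict_UNIV)
  have Gm: "Gm m integrable_on UNIV" for m
    using integrable_on_orthant_box[OF G] by (simp add: Gm_def integrable_restrict_UNIV)
  show "(\<lambda>x. if x \<in> pos_orthant then F x else 0) integrable_on cbox a b"
  proof (rule integrable_on_cbox_if_dominated_approx)
    fix e :: real assume "e > 0"
    with integral_orthant_box_tendsto[OF G G_nonneg]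
    obtain m where m: "integral pos_orthant G - integral (orthant_box m) G < e"
      by (auto simp: LIMSEQ_iff abs_less_iff dist_real_def)
    define g where "g = (\<lambda>x. if x \<in> orthant_box m then F x else 0)"
    define k where "k = (\<lambda>x. Gp x - Gm m x)"
    have "F integrable_on orthant_box m"
      unfolding orthant_box_def
      by (intro integrable_continuous continuous_on_subset[OF F])
        (rule orthant_box_subset_pos_orthant[unfolded orthant_box_def])
    then have g: "g integrable_on UNIV" by (simp add: g_def integrable_restrict_UNIV)
    have k: "k integrable_on UNIV" unfolding k_def by (intro integrable_diff Gp Gm)
    have "integral (cbox a b) k \<le> integral UNIV k"
      using orthant_box_subset_pos_orthant[of m] G_nonneg
      by (intro integral_subset_le integrable_on_subcbox[OF k] k) (auto simp: k_def Gp_def Gm_def)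
    also have "\<dots> = integral UNIV Gp - integral UNIV (Gm m)"
      unfolding k_def by (rule integral_diff[OF Gp Gm])
    also have "\<dots> = integral pos_orthant G - integral (orthant_box m) G"
      by (simp add: Gp_def Gm_def integral_restrict_UNIV)
    finally have "integral (cbox a b) k < e" using m by linarith
    moreover have "norm ((if x \<in> pos_orthant then F x else 0) - g x) \<le> k x" for x
      using orthant_box_subset_pos_orthant[of m] F_le_G[of x] by (auto simp: g_def k_def Gm_def Gp_def)
    ultimately show "\<exists>g k. g integrable_on cbox a b \<and> k integrable_on cbox a b \<and> integral (cbox a b) k < e
        \<and> (\<forall>x\<in>cbox a b. norm ((if x \<in> pos_orthant then F x else 0) - g x) \<le> k x)"
      using integrable_on_subcbox[OF g] integrable_on_subcbox[OF k] by blast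
  qed
qed

lemma multi_almost_periodic_transfer:
  fixes f :: "real^'n \<Rightarrow> 'a::real_normed_vector" and g :: "real^'n \<Rightarrow> 'b::banach"
  assumes f: "multi_almost_periodic Rc f" and g: "continuous_on UNIV g"
    and control: "\<And>a b \<epsilon> t. (\<And>s. norm (f (s + a) - f (s + b)) \<le> \<epsilon>) \<Longrightarrow>
        norm (g (t + a) - g (t + b)) \<le> C * \<epsilon>"
  shows "multi_almost_periodic Rc g"
  unfolding multi_almost_periodic_def
proof (intro conjI g ballI)
  fix b assume "b \<in> Rc"
  then obtain r f' where r: "strict_mono r"
    and "uniform_limit UNIV (\<lambda>l t. f (t + b (r l))) f' sequentially"
    using f unfolding multi_almost_periodic_def by blast
  then have f_Cauchy: "uniformly_Cauchy_on UNIV (\<lambda>l t. f (t + b (r l)))"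
    by (intro uniformly_convergent_Cauchy) (auto simp: uniformly_convergent_on_def)
  have "uniformly_Cauchy_on UNIV (\<lambda>l t. g (t + b (r l)))"
    unfolding uniformly_Cauchy_on_def
  proof (intro allI impI)
    fix e :: real assume "e > 0"
    define \<delta> where "\<delta> = e / (\<bar>C\<bar> + 1)"
    have "\<delta> > 0" using \<open>e > 0\<close> by (simp add: \<delta>_def add_nonneg_pos)
    then obtain N where N: "\<And>s m n. m \<ge> N \<Longrightarrow> n \<ge> N \<Longrightarrow> dist (f (s + b (r m))) (f (s + b (r n))) < \<delta>"
      using f_Cauchy unfolding uniformly_Cauchy_on_def by (meson UNIV_I)
    have "dist (g (t + b (r m))) (g (t + b (r n))) < e" if "m \<ge> N" "n \<ge> N" for t m n
    proof -
      have "norm (g (t + b (r m)) - g (t + b (r n))) \<le> C * \<delta>"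
        using N[OF that] by (intro control) (simp add: dist_norm less_imp_le)
      also have "\<dots> \<le> \<bar>C\<bar> * \<delta>" using \<open>\<delta> > 0\<close> by (simp add: mult_right_mono)
      also have "\<dots> < (\<bar>C\<bar> + 1) * \<delta>" using \<open>\<delta> > 0\<close> by simp
      also have "\<dots> = e" by (simp add: \<delta>_def add_nonneg_pos)
      finally show ?thesis by (simp add: dist_norm)
    qed
    then show "\<exists>M. \<forall>t\<in>UNIV. \<forall>m\<ge>M. \<forall>n\<ge>M. dist (g (t + b (r m))) (g (t + b (r n))) < e"
      by blast
  qed
  then obtain g' where "uniform_limit UNIV (\<lambda>l t. g (t + b (r l))) g' sequentially"
    by (auto simp: uniformly_convergent_eq_Cauchy[symmetric] uniformly_convergent_on_def)
  with r show "\<exists>r g'. strict_mono r \<and> uniform_limit UNIV (\<lambda>l t. g (t + b (r l))) g' sequentially"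
    by blast
qed

locale orthant_kernel =
  fixes R :: "real^'n \<Rightarrow> ('x::banach \<Rightarrow>\<^sub>L 'y::banach)"
  assumes strongly_continuous: "\<And>x. continuous_on pos_orthant (\<lambda>t. R t x)"
    and norm_integrable: "(\<lambda>t. norm (R t)) integrable_on pos_orthant"
begin

lemma
  assumes h: "continuous_on pos_orthant h" and h_le: "\<And>u. u \<in> pos_orthant \<Longrightarrow> norm (h u) \<le> M"
  shows integrable_apply: "(\<lambda>u. R u (h u)) integrable_on pos_orthant"
    and integrable_norm_apply: "(\<lambda>u. norm (R u (h u))) integrable_on pos_orthant"
    and norm_integral_apply_le:
      "norm (integral pos_orthant (\<lambda>u. R u (h u))) \<le> M * integral pos_orthant (\<lambda>t. norm (R t))"
proof -
  have cont: "continuous_on pos_orthant (\<lambda>u. R u (h u))"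
    by (rule continuous_on_strongly_continuous_apply[OF strongly_continuous h])
  have dom: "(\<lambda>u. M * norm (R u)) integrable_on pos_orthant"
    using integrable_on_cmult_left[OF norm_integrable, of M] by simp
  have le: "norm (R u (h u)) \<le> M * norm (R u)" if "u \<in> pos_orthant" for u
    using norm_blinfun[of "R u" "h u"] mult_left_mono[OF h_le[OF that], of "norm (R u)"]
    by (simp add: mult.commute)
  show int: "(\<lambda>u. R u (h u)) integrable_on pos_orthant"
    by (rule integrable_on_pos_orthant_if_continuous_dominated[OF cont dom le])
  show "(\<lambda>u. norm (R u (h u))) integrable_on pos_orthant"
    using le by (intro integrable_on_pos_orthant_if_continuous_dominated[OF continuous_on_norm[OF cont] dom]) simp
  have "norm (integral pos_orthant (\<lambda>u. R u (h u))) \<le> integral pos_orthant (\<lambda>u. M * norm (R u))"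
    by (rule integral_norm_bound_integral[OF int dom le])
  also have "\<dots> = M * integral pos_orthant (\<lambda>t. norm (R t))"
    by (rule integral_mult[OF norm_integrable, symmetric])
  finally show "norm (integral pos_orthant (\<lambda>u. R u (h u))) \<le> M * integral pos_orthant (\<lambda>t. norm (R t))" .
qed

definition conv :: "(real^'n \<Rightarrow> 'x) \<Rightarrow> real^'n \<Rightarrow> 'y" where
  "conv f t = integral pos_orthant (\<lambda>u. R u (f (t - u)))"

context
  fixes f :: "real^'n \<Rightarrow> 'x" and M :: real
  assumes f: "continuous_on UNIV f" and f_le: "\<And>s. norm (f s) \<le> M"
begin

lemma
  shows conv_has_integral_lower_orthant: "((\<lambda>s. R (t - s) (f s)) has_integral conv f t) (lower_orthant t)"
    and integrable_norm_lower_orthant: "(\<lambda>s. norm (R (t - s) (f s))) integrable_on lower_orthant t"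
proof -
  have "((\<lambda>u. R u (f (t - u))) has_integral conv f t) pos_orthant"
    unfolding conv_def
    by (rule integrable_integral, rule integrable_apply[OF continuous_on_reflect_translate[OF f] f_le])
  from has_integral_reflect_translate[OF this, of t]
  show "((\<lambda>s. R (t - s) (f s)) has_integral conv f t) (lower_orthant t)"
    by (simp add: minus_image_pos_orthant)
  have "((\<lambda>u. norm (R u (f (t - u)))) has_integral integral pos_orthant (\<lambda>u. norm (R u (f (t - u))))) pos_orthant"
    by (rule integrable_integral, rule integrable_norm_apply[OF continuous_on_reflect_translate[OF f] f_le])
  from has_integral_reflect_translate[OF this, of t]
  show "(\<lambda>s. norm (R (t - s) (f s))) integrable_on lower_orthant t"
    by (auto simp: minus_image_pos_orthant intro: has_integral_integrable)
qed

lemma norm_diff_le: "norm (f p - f q) \<le> 2 * M"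
  using norm_triangle_ineq4[of "f p" "f q"] f_le[of p] f_le[of q] by linarith

lemma integrable_apply_diff:
  "(\<lambda>u. R u (f (t1 - u) - f (t2 - u))) integrable_on pos_orthant"
  using norm_diff_le
  by (intro integrable_apply continuous_on_diff continuous_on_reflect_translate[OF f])

lemma integrable_norm_apply_diff:
  "(\<lambda>u. norm (R u (f (t1 - u) - f (t2 - u)))) integrable_on pos_orthant"
  using norm_diff_le
  by (intro integrable_norm_apply continuous_on_diff continuous_on_reflect_translate[OF f])

lemma conv_diff:
  "conv f t1 - conv f t2 = integral pos_orthant (\<lambda>u. R u (f (t1 - u) - f (t2 - u)))"
  unfolding conv_def blinfun.diff_right
  by (rule integral_diff[symmetric]; rule integrable_apply[OF continuous_on_reflect_translate[OF f] f_le])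

lemma norm_conv_diff_le:
  assumes "\<And>u. norm (f (t1 - u) - f (t2 - u)) \<le> \<epsilon>"
  shows "norm (conv f t1 - conv f t2) \<le> \<epsilon> * integral pos_orthant (\<lambda>t. norm (R t))"
  unfolding conv_diff
  by (rule norm_integral_apply_le)
    (auto intro: continuous_on_diff continuous_on_reflect_translate[OF f] assms)

lemma norm_conv_diff_le_integral:
  "norm (conv f t1 - conv f t2) \<le> integral pos_orthant (\<lambda>u. norm (R u (f (t1 - u) - f (t2 - u))))"
  unfolding conv_diff
  by (rule integral_norm_bound_integral[OF integrable_apply_diff integrable_norm_apply_diff]) simp

lemma continuous_on_conv: "continuous_on UNIV (conv f)"
  unfolding continuous_on_sequentially o_def
proof (intro allI ballI impI)
  fix x :: "nat \<Rightarrow> real^'n" and a :: "real^'n"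
  assume "(\<forall>n. x n \<in> UNIV) \<and> x \<longlonglongrightarrow> a"
  then have x: "x \<longlonglongrightarrow> a" by blast
  define \<psi> where "\<psi> n = (\<lambda>u. norm (R u (f (x n - u) - f (a - u))))" for n
  have \<psi>: "\<psi> n integrable_on pos_orthant" for n
    unfolding \<psi>_def by (rule integrable_norm_apply_diff)
  have \<psi>_le: "norm (\<psi> n u) \<le> 2 * M * norm (R u)" for n u
  proof -
    have "norm (\<psi> n u) \<le> norm (R u) * norm (f (x n - u) - f (a - u))"
      by (simp add: \<psi>_def norm_blinfun)
    also have "\<dots> \<le> norm (R u) * (2 * M)" by (intro mult_left_mono norm_diff_le norm_ge_zero)
    finally show ?thesis by (simp add: mult_ac)
  qed
  have \<psi>_lim: "(\<lambda>n. \<psi> n u) \<longlonglongrightarrow> 0" for u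
  proof -
    have "(\<lambda>n. f (x n - u)) \<longlonglongrightarrow> f (a - u)"
      using f by (intro isCont_tendsto_compose[OF _ tendsto_diff[OF x tendsto_const]])
        (simp add: continuous_on_eq_continuous_at)
    then have "(\<lambda>n. R u (f (x n - u) - f (a - u))) \<longlonglongrightarrow> R u 0"
      by (intro blinfun.tendsto tendsto_const) (simp add: LIM_zero_iff)
    then show ?thesis unfolding \<psi>_def by (intro tendsto_norm_zero) simp
  qed
  have "(\<lambda>u. 2 * M * norm (R u)) integrable_on pos_orthant"
    using integrable_on_cmult_left[OF norm_integrable, of "2 * M"] by simp
  from dominated_convergence(2)[OF \<psi> this \<psi>_le \<psi>_lim]
  have lim: "(\<lambda>n. integral pos_orthant (\<psi> n)) \<longlonglongrightarrow> 0" by simp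
  have "norm (conv f (x n) - conv f a) \<le> integral pos_orthant (\<psi> n)" for n
    unfolding \<psi>_def by (rule norm_conv_diff_le_integral)
  then have "(\<lambda>n. conv f (x n) - conv f a) \<longlonglongrightarrow> 0"
    by (intro Lim_null_comparison[OF always_eventually lim]) blast
  then show "(\<lambda>n. conv f (x n)) \<longlonglongrightarrow> conv f a" by (simp add: LIM_zero_iff)
qed

end

lemma multi_almost_periodic_conv:
  assumes "bounded (range f)" and f: "multi_almost_periodic Rc f"
  shows "multi_almost_periodic Rc (conv f)"
proof -
  obtain M where M: "\<And>s. norm (f s) \<le> M" using assms(1) unfolding bounded_iff by auto
  have f_cont: "continuous_on UNIV f" using f by (simp add: multi_almost_periodic_def)
  show ?thesis
  proof (rule multi_almost_periodic_transfer[OF f continuous_on_conv[OF f_cont M]])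
    fix a b \<epsilon> t assume "\<And>s. norm (f (s + a) - f (s + b)) \<le> \<epsilon>"
    then have "norm (f (t + a - u) - f (t + b - u)) \<le> \<epsilon>" for u
      by (metis diff_add_eq)
    then show "norm (conv f (t + a) - conv f (t + b)) \<le> integral pos_orthant (\<lambda>t. norm (R t)) * \<epsilon>"
      using norm_conv_diff_le[OF f_cont M] by (simp add: mult.commute)
  qed
qed

end

theorem theorem2p53:
  fixes Rc :: "(nat \<Rightarrow> real^'n) set"
    and R :: "real^'n \<Rightarrow> ('x::banach \<Rightarrow>\<^sub>L 'y::banach)"
    and f :: "real^'n \<Rightarrow> 'x"
  assumes "Rc \<noteq> {}"
    and "\<And>x. continuous_on pos_orthant (\<lambda>t. R t x)"
    and "(\<lambda>t. norm (R t)) integrable_on pos_orthant"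
    and "bounded (range f)"
    and "multi_almost_periodic Rc f"
  shows "(\<forall>t. (\<lambda>s. R (t - s) (f s)) integrable_on lower_orthant t
            \<and> (\<lambda>s. norm (R (t - s) (f s))) integrable_on lower_orthant t)
     \<and> multi_almost_periodic Rc
         (\<lambda>t. integral (lower_orthant t) (\<lambda>s. R (t - s) (f s)))"
proof -
  interpret orthant_kernel R using assms(2,3) by unfold_locales
  obtain M where M: "\<And>s. norm (f s) \<le> M" using assms(4) unfolding bounded_iff by auto
  have f: "continuous_on UNIV f" using assms(5) by (simp add: multi_almost_periodic_def)
  note conv_integral = conv_has_integral_lower_orthant[OF f M]
  have "(\<lambda>t. integral (lower_orthant t) (\<lambda>s. R (t - s) (f s))) = conv f"
    using conv_integral by (auto intro: integral_unique)
  then show ?thesis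
    using conv_integral integrable_norm_lower_orthant[OF f M] multi_almost_periodic_conv[OF assms(4,5)]
    by (auto intro: has_integral_integrable)
qed

end
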